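(* For every $n\ge1$ and every Boolean function $f:\{0,1\}^n\to\{0,1\}$, $bs(f)\le 2\,s(f)^4$.
   Context: For $x\in\{0,1\}^n$ and $S\subseteq[n]=\{1,\dots,n\}$, $x^{(S)}$ denotes the string differing from $x$ exactly in the coordinates of $S$. The sensitivity $s(f,x)$ is the number of $i\in[n]$ with $f(x)\neq f(x^{(\{i\})})$, and $s(f)=\max_x s(f,x)$. The block sensitivity $bs(f)$ is the maximum $t$ such that there exist an input $x\in\{0,1\}^n$ and pairwise disjoint nonempty sets $B_1,\dots,B_t\subseteq[n]$ with $f(x)\ne f(x^{(B_j)})$ for all $j$. *)

theory Defs
  imports Main
begin

text \<open>An input x in {0,1}^n is encoded as the set of coordinates i in [n] with x_i = 1,
  i.e. a subset of {1..n}. A Boolean function on {0,1}^n is f :: nat set => bool,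
  only ever evaluated on subsets of {1..n}.\<close>

definition cube :: "nat \<Rightarrow> nat set set" where
  "cube n = Pow {1..n}"

definition flip :: "nat set \<Rightarrow> nat set \<Rightarrow> nat set" where
  "flip x S = (x - S) \<union> (S - x)"

definition sens_at :: "nat \<Rightarrow> (nat set \<Rightarrow> bool) \<Rightarrow> nat set \<Rightarrow> nat" where
  "sens_at n f x = card {i \<in> {1..n}. f x \<noteq> f (flip x {i})}"

definition sensitivity :: "nat \<Rightarrow> (nat set \<Rightarrow> bool) \<Rightarrow> nat" where
  "sensitivity n f = Max ((\<lambda>x. sens_at n f x) ` cube n)"

definition block_sensitivity :: "nat \<Rightarrow> (nat set \<Rightarrow> bool) \<Rightarrow> nat" where
  "block_sensitivity n f = Max {t. \<exists>x \<in> cube n. \<exists>B :: nat \<Rightarrow> nat set.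
      (\<forall>j<t. B j \<noteq> {} \<and> B j \<subseteq> {1..n} \<and> f x \<noteq> f (flip x (B j))) \<and>
      (\<forall>j<t. \<forall>k<t. j \<noteq> k \<longrightarrow> B j \<inter> B k = {})}"

end

theory Submission
  imports Defs Complex_Main
begin

text \<open>Following Nisan and Szegedy, symmetrizing \<open>f\<close> over \<open>t\<close> disjoint sensitive blocks at \<open>x\<close>
  yields a function \<open>p\<close> on \<open>{0..t}\<close> of degree at most \<open>deg f\<close> with \<open>p 0 = 0\<close>, \<open>p 1 = 1\<close> and
  values in \<open>[0, 1]\<close>; a discrete Markov inequality then forces \<open>t \<le> 2 (deg f)\<^sup>2\<close>. By Huang's
  theorem \<open>deg f \<le> s(f)\<^sup>2\<close>: if the top Moebius coefficient of \<open>f\<close> on an \<open>m\<close>-dimensional subcube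
  is nonzero, one class of the colouring \<open>(-1)\<^bsup>|Q|\<^esup> (-1)\<^bsup>f\<^esup>\<close> has more than \<open>2\<^bsup>m-1\<^esup>\<close> vertices, and a
  \<open>\<surd>m\<close>-eigenvector of Huang's signed adjacency matrix supported on that class exhibits a vertex
  of sensitivity at least \<open>\<surd>m\<close>.\<close>

section \<open>Divided differences and degree\<close>

definition divided_diff :: "nat set \<Rightarrow> (nat \<Rightarrow> real) \<Rightarrow> real" where
  "divided_diff K p = (\<Sum>z\<in>K. p z / (\<Prod>w\<in>K - {z}. (real z - real w)))"

text \<open>A function on \<open>\<nat>\<close> agrees with a real polynomial of degree at most \<open>m\<close> iff all its
  divided differences on \<open>m + 2\<close> or more nodes vanish, so this expresses the degree bound without
  a type of polynomials.\<close>

definition degree_le :: "nat \<Rightarrow> (nat \<Rightarrow> real) \<Rightarrow> bool" where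
  "degree_le m p \<longleftrightarrow> (\<forall>K. finite K \<longrightarrow> m + 2 \<le> card K \<longrightarrow> divided_diff K p = 0)"

lemma divided_diff_linear:
  "divided_diff K (\<lambda>z. a * p z + b * q z) = a * divided_diff K p + b * divided_diff K q"
  unfolding divided_diff_def
  by (simp add: sum.distrib sum_distrib_left add_divide_distrib mult.assoc)

lemma divided_diff_insert_factor:
  assumes "finite K" "a \<notin> K"
  shows "divided_diff (insert a K) (\<lambda>z. (real z - real a) * p z) = divided_diff K p"
proof -
  have "(real z - real a) * p z / (\<Prod>w\<in>insert a K - {z}. (real z - real w))
      = p z / (\<Prod>w\<in>K - {z}. (real z - real w))" if "z \<in> K" for z
  proof -
    have "insert a K - {z} = insert a (K - {z})" "z \<noteq> a" using that assms by auto
    then show ?thesis using assms by simp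
  qed
  then show ?thesis
    unfolding divided_diff_def using assms by (simp add: sum.insert)
qed

lemma divided_diff_const:
  assumes "finite K" "2 \<le> card K"
  shows "divided_diff K (\<lambda>z. c) = 0"
proof -
  have "divided_diff K (\<lambda>z. 1) = 0"
    using assms
  proof (induction "card K" arbitrary: K rule: less_induct)
    case less
    obtain T where "T \<subseteq> K" "card T = 2" using less.prems obtain_subset_with_card_n by metis
    then obtain a b where ab: "a \<in> K" "b \<in> K" "a \<noteq> b" by (auto simp: card_2_iff)
    have Ka: "K = insert a (K - {a})" and Kb: "K = insert b (K - {b})" using ab by auto
    \<comment> \<open>the constant \<open>1\<close> is a combination of the two linear factors \<open>z - b\<close> and \<open>z - a\<close>\<close>
    have "(\<lambda>z::nat. 1::real) = (\<lambda>z. (1 / (real a - real b)) * ((real z - real b) * 1)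
        + (-1 / (real a - real b)) * ((real z - real a) * 1))" (is "_ = ?comb")
      using ab by (auto simp: divide_simps)
    moreover have "divided_diff K ?comb
        = (divided_diff (K - {b}) (\<lambda>z. 1) - divided_diff (K - {a}) (\<lambda>z. 1)) / (real a - real b)"
      unfolding divided_diff_linear
      using divided_diff_insert_factor[of "K - {b}" b "\<lambda>z. 1"]
        divided_diff_insert_factor[of "K - {a}" a "\<lambda>z. 1"] Ka Kb less.prems
      by (simp add: diff_divide_distrib)
    ultimately have "divided_diff K (\<lambda>z. 1)
        = (divided_diff (K - {b}) (\<lambda>z. 1) - divided_diff (K - {a}) (\<lambda>z. 1)) / (real a - real b)"
      by simp
    moreover have "divided_diff (K - {b}) (\<lambda>z. 1) = divided_diff (K - {a}) (\<lambda>z. 1)"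
    proof (cases "card K = 2")
      case True
      then have "K - {b} = {a}" "K - {a} = {b}" using ab less.prems by (auto simp: card_2_iff)
      then show ?thesis by (simp add: divided_diff_def)
    next
      case False
      then show ?thesis using less ab by (simp add: card_Diff_singleton)
    qed
    ultimately show ?case by simp
  qed
  then show ?thesis using divided_diff_linear[of K c "\<lambda>z. 1" 0 "\<lambda>z. 1"] by simp
qed

lemma degree_le_const: "degree_le m (\<lambda>z. c)"
  unfolding degree_le_def by (auto intro: divided_diff_const)

lemma degree_le_mono: "degree_le m p \<Longrightarrow> m \<le> m' \<Longrightarrow> degree_le m' p"
  unfolding degree_le_def by auto

lemma degree_le_linear:
  "degree_le m p \<Longrightarrow> degree_le m q \<Longrightarrow> degree_le m (\<lambda>z. a * p z + b * q z)"
  unfolding degree_le_def by (simp add: divided_diff_linear)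

lemma degree_le_scale: "degree_le m p \<Longrightarrow> degree_le m (\<lambda>z. a * p z)"
  using degree_le_linear[of m p p a 0] by simp

lemma degree_le_sum:
  "finite A \<Longrightarrow> (\<And>r. r \<in> A \<Longrightarrow> degree_le m (p r)) \<Longrightarrow> degree_le m (\<lambda>z. \<Sum>r\<in>A. p r z)"
proof (induction A rule: finite_induct)
  case empty
  then show ?case using degree_le_const[of m 0] by simp
next
  case (insert x F)
  then show ?case using degree_le_linear[of m "p x" "\<lambda>z. \<Sum>r\<in>F. p r z" 1 1] by simp
qed

lemma degree_le_mult_linear:
  assumes "degree_le m p"
  shows "degree_le (Suc m) (\<lambda>z. (real z - c) * p z)"
  unfolding degree_le_def
proof (intro allI impI)
  fix K :: "nat set"
  assume K: "finite K" "Suc m + 2 \<le> card K"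
  then obtain a where a: "a \<in> K" by fastforce
  have "divided_diff K (\<lambda>z. (real z - real a) * p z) = divided_diff (K - {a}) p"
    using divided_diff_insert_factor[of "K - {a}" a p] K a by (simp add: insert_absorb)
  also have "\<dots> = 0" using assms K a unfolding degree_le_def by (simp add: card_Diff_singleton)
  finally have "divided_diff K (\<lambda>z. (real z - real a) * p z) = 0" .
  moreover have "divided_diff K p = 0" using assms K unfolding degree_le_def by auto
  moreover have "(\<lambda>z. (real z - c) * p z) = (\<lambda>z. 1 * ((real z - real a) * p z) + (real a - c) * p z)"
    by (auto simp: field_simps)
  ultimately show "divided_diff K (\<lambda>z. (real z - c) * p z) = 0"
    by (simp only: divided_diff_linear)
qed

lemma degree_le_binomial: "degree_le v (\<lambda>k. real (k choose v))"
proof -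
  have "degree_le v (\<lambda>k. \<Prod>i<v. (real k - real i))"
  proof (induction v)
    case 0
    then show ?case using degree_le_const[of 0 1] by simp
  next
    case (Suc v)
    then show ?case using degree_le_mult_linear[OF Suc, of "real v"] by (simp add: mult.commute)
  qed
  moreover have "(\<lambda>k. real (k choose v)) = (\<lambda>k. (1 / fact v) * (\<Prod>i<v. (real k - real i)))"
    by (auto simp: binomial_gbinomial gbinomial_prod_rev field_simps atLeast0LessThan)
  ultimately show ?thesis by (simp only: degree_le_scale)
qed

lemma degree_le_scaled_binomial:
  assumes "v \<le> d"
  shows "degree_le d (\<lambda>k. c * (real (k choose v) / r))"
proof -
  have "degree_le v (\<lambda>k. c / r * real (k choose v))"
    by (rule degree_le_scale[OF degree_le_binomial])
  then show ?thesis using assms by (simp add: degree_le_mono)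
qed

section \<open>A discrete Markov inequality\<close>

lemma prod_node_diff:
  assumes "j \<le> d"
  shows "(\<Prod>i\<in>{..d} - {j}. (real j - real i)) = (-1) ^ (d - j) * fact j * fact (d - j)"
  using assms
proof (induction d rule: nat_induct_at_least)
  case base
  have "(\<Prod>i\<in>{..j} - {j}. (real j - real i)) = (\<Prod>i\<in>{0..<j}. real (j - i))"
    by (intro prod.cong) (auto simp: of_nat_diff)
  also have "\<dots> = fact j" by (simp add: fact_prod_rev)
  finally show ?case by simp
next
  case (Suc d)
  have "{..Suc d} - {j} = insert (Suc d) ({..d} - {j})" using Suc by auto
  then have "(\<Prod>i\<in>{..Suc d} - {j}. (real j - real i))
      = - real (Suc (d - j)) * ((-1) ^ (d - j) * fact j * fact (d - j))"
    using Suc by (simp add: of_nat_diff)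
  also have "\<dots> = (-1) ^ (Suc d - j) * fact j * fact (Suc d - j)"
    using Suc by (simp add: Suc_diff_le algebra_simps)
  finally show ?case .
qed

lemma prod_atMost_add_mult_fact:
  assumes "1 \<le> j"
  shows "(\<Prod>i\<le>d. (real j + real i)) * fact (j - 1) = fact (j + d)"
proof (induction d)
  case 0
  then show ?case using assms by (simp add: fact_num_eq_if)
next
  case (Suc d)
  then show ?case by (simp add: atMost_Suc algebra_simps)
qed

lemma prod_node_sum:
  assumes "1 \<le> j" "j \<le> d"
  shows "2 * fact j * (\<Prod>i\<in>{..d} - {j}. (real j + real i)) = fact (d + j)"
proof -
  have "(\<Prod>i\<le>d. (real j + real i)) = (real j + real j) * (\<Prod>i\<in>{..d} - {j}. (real j + real i))"
    using assms by (subst prod.remove[of _ j]) auto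
  moreover have "fact j = real j * fact (j - 1)" using assms by (simp add: fact_num_eq_if)
  ultimately show ?thesis
    using prod_atMost_add_mult_fact[OF assms(1), of d] by (simp add: algebra_simps)
qed

lemma prod_node_square_diff:
  assumes "1 \<le> j" "j \<le> d"
  shows "(\<Prod>i\<in>{..d} - {j}. (real j - real i) * (real j + real i))
    = (-1) ^ (d - j) * fact (d - j) * fact (d + j) / 2"
proof -
  have "(\<Prod>i\<in>{..d} - {j}. (real j - real i) * (real j + real i))
     = (\<Prod>i\<in>{..d} - {j}. (real j - real i)) * (\<Prod>i\<in>{..d} - {j}. (real j + real i))"
    by (rule prod.distrib)
  moreover have "fact j > (0::real)" by simp
  ultimately show ?thesis
    using prod_node_diff[OF assms(2)] prod_node_sum[OF assms] by (simp add: field_simps)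
qed

lemma prod_node_square_diff_0:
  "(\<Prod>i\<in>{..d} - {0}. (real 0 - real i) * (real 0 + real i)) = (-1) ^ d * fact d * fact d"
proof -
  have "(\<Prod>i\<in>{..d} - {0}. (real 0 - real i) * (real 0 + real i))
     = (\<Prod>i\<in>{..d} - {0}. (real 0 - real i)) * (\<Prod>i\<in>{..d} - {0}. real i)"
    by (subst prod.distrib[symmetric]) (rule prod.cong; simp)
  moreover have "{..d} - {0} = {1..d}" by auto
  ultimately show ?thesis using prod_node_diff[of 0 d] by (simp add: fact_prod)
qed

lemma fact_mult_fact_le:
  assumes "j \<le> d"
  shows "fact d * fact d \<le> fact (d - j) * (fact (d + j) :: nat)"
  using assms
proof (induction j)
  case 0
  then show ?case by simp
next
  case (Suc j)
  have "d - j = Suc (d - Suc j)" using Suc by simp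
  then have "fact (d - j) * fact (d + j) = (d - j) * (fact (d - Suc j) * fact (d + j))"
    by (simp add: algebra_simps)
  also have "\<dots> \<le> (d + Suc j) * (fact (d - Suc j) * fact (d + j))"
    by (intro mult_right_mono) auto
  also have "\<dots> = fact (d - Suc j) * fact (d + Suc j)" by (simp add: algebra_simps)
  finally show ?case using Suc by simp
qed

lemma sum_odd_weights_le:
  assumes "1 \<le> d"
  shows "(\<Sum>j\<in>{1..d}. if odd j then 2 / (1 + 2 * real j ^ 2) else 0) \<le> 11/12 - 1 / (4 * real ((d + 1) div 2))"
  using assms
proof (induction d rule: nat_induct_at_least)
  case base
  then show ?case by simp
next
  case (Suc n)
  have e: "{1..Suc n} = insert (Suc n) {1..n}" by auto
  show ?case
  proof (cases "odd (Suc n)")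
    case False
    then have "(Suc n + 1) div 2 = (n + 1) div 2" by presburger
    then show ?thesis using Suc False unfolding e by simp
  next
    case True
    then obtain M where M: "n = 2 * M" by (metis even_Suc evenE)
    have M1: "1 \<le> M" using M Suc by simp
    have d1: "(n + 1) div 2 = M" "(Suc n + 1) div 2 = M + 1" using M by presburger+
    \<comment> \<open>telescoping: \<open>2 / (1 + 2 (2M+1)\<^sup>2) \<le> 1 / (4M(M+1))\<close>\<close>
    have "2 / (1 + 2 * real (Suc n) ^ 2) = 2 / (8 * real M ^ 2 + 8 * real M + 3)"
      using M by (simp add: power2_eq_square algebra_simps)
    also have "\<dots> \<le> 2 / (8 * real M ^ 2 + 8 * real M)"
      using M1 by (intro divide_left_mono mult_pos_pos add_nonneg_pos) auto
    also have "\<dots> = 2 / (2 * (4 * real M * (real M + 1)))"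
      by (simp add: power2_eq_square algebra_simps)
    also have "\<dots> = 1 / (4 * real M * (real M + 1))"
      by (simp only: divide_divide_eq_left[symmetric])
    also have "\<dots> = 1 / (4 * real M) - 1 / (4 * real (M + 1))"
      using M1 by (simp add: field_simps)
    finally show ?thesis using Suc.IH True unfolding e d1 by simp
  qed
qed

lemma sum_odd_weights_less_1:
  "(\<Sum>j\<in>{1..d}. if odd j then 2 / (1 + 2 * real j ^ 2) else 0) < 1"
proof (cases "d = 0")
  case False
  then have "1 / (4 * real ((d + 1) div 2)) > 0" by simp
  then show ?thesis using sum_odd_weights_le[of d] False by linarith
qed simp

lemma prod_Markov_node_diff:
  assumes "j \<le> d"
  shows "(\<Prod>w\<in>insert 0 ((\<lambda>i. 1 + 2 * i ^ 2) ` {..d}) - {1 + 2 * j ^ 2}. (real (1 + 2 * j ^ 2) - real w))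
    = real (1 + 2 * j ^ 2) * 2 ^ d * (\<Prod>i\<in>{..d} - {j}. (real j - real i) * (real j + real i))"
proof -
  define y :: "nat \<Rightarrow> nat" where "y i = 1 + 2 * i ^ 2" for i
  have yinj: "inj_on y A" for A
    unfolding y_def by (intro strict_mono_imp_inj_on strict_monoI) (simp add: power_strict_mono)
  have y0: "0 \<notin> y ` A" for A unfolding y_def by auto
  have "insert 0 (y ` {..d}) - {y j} = insert 0 (y ` ({..d} - {j}))"
    using yinj[of "{..d}"] assms y0 by (auto simp: inj_on_eq_iff)
  then have "(\<Prod>w\<in>insert 0 (y ` {..d}) - {y j}. (real (y j) - real w))
      = real (y j) * (\<Prod>i\<in>{..d} - {j}. (real (y j) - real (y i)))"
    using y0 by (simp add: prod.reindex[OF yinj])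
  also have "(\<Prod>i\<in>{..d} - {j}. (real (y j) - real (y i)))
      = (\<Prod>i\<in>{..d} - {j}. 2 * ((real j - real i) * (real j + real i)))"
    by (intro prod.cong) (auto simp: y_def power2_eq_square algebra_simps)
  also have "\<dots> = 2 ^ d * (\<Prod>i\<in>{..d} - {j}. (real j - real i) * (real j + real i))"
    using assms by (simp add: prod.distrib)
  finally show ?thesis unfolding y_def by simp
qed

lemma divided_diff_Markov_nodes:
  fixes p :: "nat \<Rightarrow> real"
  assumes "p 0 = 0"
  shows "divided_diff (insert 0 ((\<lambda>j. 1 + 2 * j ^ 2) ` {..d})) p * ((-2) ^ d * fact d * fact d)
    = p 1 + (\<Sum>j\<in>{1..d}. (-1) ^ j * p (1 + 2 * j ^ 2)
        * (2 * fact d * fact d / (real (1 + 2 * j ^ 2) * fact (d - j) * fact (d + j))))"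
proof -
  define y :: "nat \<Rightarrow> nat" where "y j = 1 + 2 * j ^ 2" for j
  define K where "K = insert 0 (y ` {..d})"
  define E where "E j = (\<Prod>i\<in>{..d} - {j}. (real j - real i) * (real j + real i))" for j
  define F :: real where "F = fact d * fact d"
  have yinj: "inj_on y A" for A
    unfolding y_def by (intro strict_mono_imp_inj_on strict_monoI) (simp add: power_strict_mono)
  have y0: "0 \<notin> y ` A" for A unfolding y_def by auto
  have yj: "real (y j) \<noteq> 0" for j unfolding y_def by (simp only: of_nat_eq_0_iff)
  have node_prod: "(\<Prod>w\<in>K - {y j}. (real (y j) - real w)) = real (y j) * 2 ^ d * E j"
    if "j \<le> d" for j
    unfolding K_def E_def y_def using prod_Markov_node_diff[OF that] .
  have minus_2: "(-2::real) ^ d = 2 ^ d * (-1) ^ d"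
    by (subst power_mult_distrib[symmetric]) simp
  have term_0: "p (y 0) / (real (y 0) * 2 ^ d * E 0) * ((-2) ^ d * F) = p 1"
    using prod_node_square_diff_0[of d] unfolding minus_2 by (simp add: y_def E_def F_def)
  have term_j: "p (y j) / (real (y j) * 2 ^ d * E j) * ((-2) ^ d * F)
      = (-1) ^ j * p (y j) * (2 * F / (real (y j) * fact (d - j) * fact (d + j)))"
    if "1 \<le> j" "j \<le> d" for j
  proof -
    have sign: "(-2::real) ^ d = 2 ^ d * (-1) ^ (d - j) * (-1) ^ j"
      using that unfolding minus_2 by (simp add: mult.assoc flip: power_add)
    have Ej: "E j = (-1) ^ (d - j) * (fact (d - j) * fact (d + j)) / 2"
      using prod_node_square_diff[OF that] unfolding E_def by (simp add: mult.assoc)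
    have alg: "q / (Y * 2 ^ d * (s * (X1 * X2) / 2)) * (2 ^ d * s * S * F) = S * q * (2 * F / (Y * X1 * X2))"
      if "s \<noteq> 0" "X1 \<noteq> 0" "X2 \<noteq> 0" "Y \<noteq> 0" for q Y s X1 X2 S :: real
      using that by (simp add: field_simps)
    show ?thesis unfolding sign Ej by (rule alg[OF _ _ _ yj]) simp_all
  qed
  have "divided_diff K p = (\<Sum>j\<le>d. p (y j) / (\<Prod>w\<in>K - {y j}. (real (y j) - real w)))"
    unfolding divided_diff_def K_def using assms y0 by (simp add: sum.reindex[OF yinj])
  also have "\<dots> = (\<Sum>j\<le>d. p (y j) / (real (y j) * 2 ^ d * E j))"
    by (intro sum.cong) (auto simp: node_prod)
  also have "{..d} = insert 0 {1..d}" by auto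
  finally have "divided_diff K p * ((-2) ^ d * F)
      = p (y 0) / (real (y 0) * 2 ^ d * E 0) * ((-2) ^ d * F)
        + (\<Sum>j\<in>{1..d}. p (y j) / (real (y j) * 2 ^ d * E j) * ((-2) ^ d * F))"
    by (simp add: sum_distrib_right distrib_right)
  also have "\<dots> = p 1 + (\<Sum>j\<in>{1..d}. (-1) ^ j * p (y j)
      * (2 * F / (real (y j) * fact (d - j) * fact (d + j))))"
    unfolding term_0 by (intro arg_cong2[where f = "(+)"] sum.cong refl) (use term_j in auto)
  finally show ?thesis unfolding K_def F_def y_def by (simp add: mult.assoc)
qed

text \<open>If \<open>t > 2 d\<^sup>2\<close>, all the nodes \<open>0\<close> and \<open>1 + 2 j\<^sup>2\<close> (\<open>j \<le> d\<close>) lie in \<open>[0, t]\<close>, so the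
  \<open>(d+1)\<close>-st divided difference of \<open>p\<close> on them vanishes; but in that identity the term \<open>p 1 = 1\<close>
  outweighs all negative terms, whose weights sum to less than \<open>1\<close>.\<close>

theorem discrete_Markov_inequality:
  assumes deg: "degree_le d p" and p0: "p 0 = 0" and p1: "p 1 = 1"
    and bounded: "\<And>k. k \<le> t \<Longrightarrow> 0 \<le> p k \<and> p k \<le> 1"
  shows "t \<le> 2 * d ^ 2"
proof (rule ccontr)
  assume "\<not> t \<le> 2 * d ^ 2"
  then have node_le: "1 + 2 * j ^ 2 \<le> t" if "j \<le> d" for j
    using that power_mono[of j d 2] by linarith
  define w where "w j = 2 * fact d * fact d / (real (1 + 2 * j ^ 2) * fact (d - j) * fact (d + j))" for j
  have "inj_on (\<lambda>j::nat. 1 + 2 * j ^ 2) {..d}"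
    by (intro strict_mono_imp_inj_on strict_monoI) (simp add: power_strict_mono)
  then have "card (insert 0 ((\<lambda>j::nat. 1 + 2 * j ^ 2) ` {..d})) = d + 2"
    by (subst card_insert_disjoint) (auto simp: card_image)
  then have "divided_diff (insert 0 ((\<lambda>j. 1 + 2 * j ^ 2) ` {..d})) p = 0"
    using deg unfolding degree_le_def by simp
  then have sum_eq: "1 + (\<Sum>j\<in>{1..d}. (-1) ^ j * p (1 + 2 * j ^ 2) * w j) = 0"
    using divided_diff_Markov_nodes[of p d, OF p0] p1 unfolding w_def by simp
  have "(-1) ^ j * p (1 + 2 * j ^ 2) * w j \<ge> - (if odd j then 2 / (1 + 2 * real j ^ 2) else 0)"
    if j: "j \<in> {1..d}" for j
  proof -
    have pj: "0 \<le> p (1 + 2 * j ^ 2)" "p (1 + 2 * j ^ 2) \<le> 1" using bounded node_le j by auto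
    have "real (fact d * fact d) \<le> real (fact (d - j) * fact (d + j))"
      using fact_mult_fact_le[of j d] j by (intro of_nat_mono) auto
    then have "fact d * fact d / (fact (d - j) * fact (d + j)) \<le> (1::real)"
      by (simp add: divide_le_eq_1)
    moreover have "w j = 2 / (1 + 2 * real j ^ 2) * (fact d * fact d / (fact (d - j) * fact (d + j)))"
      unfolding w_def by (simp add: field_simps)
    ultimately have "w j \<le> 2 / (1 + 2 * real j ^ 2)"
      by (metis mult_left_le divide_nonneg_nonneg zero_le_numeral zero_le_power2 add_nonneg_nonneg zero_le_one mult_nonneg_nonneg)
    moreover have "0 \<le> w j" unfolding w_def by simp
    moreover have "p (1 + 2 * j ^ 2) * w j \<le> w j" using pj \<open>0 \<le> w j\<close> by (simp add: mult_left_le_one_le)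
    ultimately show ?thesis using pj by auto
  qed
  then have "(\<Sum>j\<in>{1..d}. - (if odd j then 2 / (1 + 2 * real j ^ 2) else 0))
      \<le> (\<Sum>j\<in>{1..d}. (-1) ^ j * p (1 + 2 * j ^ 2) * w j)"
    by (intro sum_mono)
  then show False using sum_eq sum_odd_weights_less_1[of d] by (simp add: sum_negf)
qed

section \<open>Huang's sensitivity theorem\<close>

lemma back_substitution:
  fixes a0 b z :: "'a \<Rightarrow> 'c::field"
  assumes "finite I" "i0 \<in> I" "a0 i0 \<noteq> 0"
    and y: "y = (\<lambda>i. if i = i0 then - (\<Sum>k\<in>I - {i0}. a0 k * z k) / a0 i0 else z i)"
  shows "(\<Sum>i\<in>I. a0 i * y i) = 0"
    and "(\<Sum>i\<in>I. b i * y i) = (\<Sum>i\<in>I - {i0}. (b i - b i0 * a0 i / a0 i0) * z i)"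
proof -
  have split: "(\<Sum>i\<in>I. c i * y i) = c i0 * y i0 + (\<Sum>i\<in>I - {i0}. c i * z i)" for c
    using assms by (simp add: sum.remove)
  show "(\<Sum>i\<in>I. a0 i * y i) = 0" unfolding split using assms by simp
  show "(\<Sum>i\<in>I. b i * y i) = (\<Sum>i\<in>I - {i0}. (b i - b i0 * a0 i / a0 i0) * z i)"
    unfolding split using assms
    by (simp add: left_diff_distrib sum_subtractf sum_distrib_left sum_divide_distrib mult.assoc)
qed

lemma homogeneous_system_nontrivial_solution:
  fixes a :: "'b \<Rightarrow> 'a \<Rightarrow> 'c::field"
  assumes "finite J" "finite I" "card J < card I"
  shows "\<exists>y. (\<exists>i\<in>I. y i \<noteq> 0) \<and> (\<forall>j\<in>J. (\<Sum>i\<in>I. a j i * y i) = 0)"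
  using assms
proof (induction J arbitrary: I a rule: finite_induct)
  case empty
  then obtain i0 where "i0 \<in> I" by fastforce
  then show ?case by (intro exI[of _ "\<lambda>i. if i = i0 then 1 else 0"]) auto
next
  case (insert j0 J)
  show ?case
  proof (cases "\<forall>i\<in>I. a j0 i = 0")
    case True
    then show ?thesis using insert.IH[of I a] insert.prems insert.hyps by auto
  next
    case False
    then obtain i0 where i0: "i0 \<in> I" "a j0 i0 \<noteq> 0" by blast
    \<comment> \<open>Gaussian elimination of the unknown \<open>i0\<close> using equation \<open>j0\<close>\<close>
    have "finite (I - {i0})" "card J < card (I - {i0})" using insert.prems insert.hyps i0 by auto
    then obtain z where z: "\<exists>i\<in>I - {i0}. z i \<noteq> 0"
      "\<forall>j\<in>J. (\<Sum>i\<in>I - {i0}. (a j i - a j i0 * a j0 i / a j0 i0) * z i) = 0"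
      using insert.IH[of "I - {i0}" "\<lambda>j i. a j i - a j i0 * a j0 i / a j0 i0"] by blast
    define y where "y = (\<lambda>i. if i = i0 then - (\<Sum>k\<in>I - {i0}. a j0 k * z k) / a j0 i0 else z i)"
    have "\<exists>i\<in>I. y i \<noteq> 0"
    proof -
      obtain i where "i \<in> I - {i0}" "z i \<noteq> 0" using z(1) by blast
      then show ?thesis unfolding y_def by (intro bexI[of _ i]) auto
    qed
    moreover have "(\<Sum>i\<in>I. a j i * y i) = 0" if "j \<in> insert j0 J" for j
      using that back_substitution(1)[OF insert.prems(1) i0 y_def]
        back_substitution(2)[OF insert.prems(1) i0 y_def, of "a j"] z(2) by auto
    ultimately show ?thesis by blast
  qed
qed

lemma flip_singleton_flip_singleton: "flip (flip S {i}) {i} = S"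
  unfolding flip_def by auto

lemma flip_singleton_commute: "flip (flip S {i}) {j} = flip (flip S {j}) {i}"
  unfolding flip_def by auto

lemma flip_flip: "flip (flip x A) B = flip x (flip A B)"
  unfolding flip_def by auto

lemma power_minus_one_card_flip_singleton:
  assumes "finite Q"
  shows "(-1::real) ^ card (flip Q {i}) = - ((-1) ^ card Q)"
proof (cases "i \<in> Q")
  case True
  then have "flip Q {i} = Q - {i}" by (auto simp: flip_def)
  moreover have "card Q = Suc (card (Q - {i}))" using card_Suc_Diff1[OF assms True] by simp
  ultimately show ?thesis by simp
next
  case False
  then show ?thesis using assms by (simp add: flip_def)
qed

definition sign_below :: "nat set \<Rightarrow> nat \<Rightarrow> real" where
  "sign_below S i = (-1) ^ card {k \<in> S. k < i}"

text \<open>Huang's signed adjacency matrix of the hypercube \<open>Pow C\<close>, acting on functions on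
  vertices. The signs make the two paths around every square of the cube cancel.\<close>

definition signed_adjacency :: "nat set \<Rightarrow> (nat set \<Rightarrow> real) \<Rightarrow> nat set \<Rightarrow> real" where
  "signed_adjacency C v S = (\<Sum>i\<in>C. sign_below S i * v (flip S {i}))"

lemma sign_below_square: "sign_below S i * sign_below S i = 1"
  unfolding sign_below_def by (simp flip: power_add)

lemma abs_sign_below: "\<bar>sign_below S i\<bar> = 1"
  unfolding sign_below_def by simp

lemma sign_below_flip_self: "sign_below (flip S {i}) i = sign_below S i"
proof -
  have "{k \<in> flip S {i}. k < i} = {k \<in> S. k < i}" unfolding flip_def by auto
  then show ?thesis unfolding sign_below_def by simp
qed

lemma sign_below_flip:
  assumes "finite S" "i \<noteq> j"
  shows "sign_below (flip S {i}) j = (if i < j then - sign_below S j else sign_below S j)"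
proof (cases "i < j")
  case False
  then have "{k \<in> flip S {i}. k < j} = {k \<in> S. k < j}" using assms unfolding flip_def by auto
  then show ?thesis using False unfolding sign_below_def by simp
next
  case True
  have "card {k \<in> S. k < j} = Suc (card {k \<in> flip S {i}. k < j})" if "i \<in> S"
  proof -
    have "{k \<in> flip S {i}. k < j} = {k \<in> S. k < j} - {i}" using that unfolding flip_def by auto
    moreover have "i \<in> {k \<in> S. k < j}" "finite {k \<in> S. k < j}" using that True assms by auto
    ultimately show ?thesis by (simp only: card_Suc_Diff1)
  qed
  moreover have "card {k \<in> flip S {i}. k < j} = Suc (card {k \<in> S. k < j})" if "i \<notin> S"
  proof -
    have "{k \<in> flip S {i}. k < j} = insert i {k \<in> S. k < j}" using that True unfolding flip_def by auto
    then show ?thesis using that assms by simp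
  qed
  ultimately show ?thesis using True unfolding sign_below_def by (cases "i \<in> S") auto
qed

lemma signed_adjacency_linear:
  "signed_adjacency C (\<lambda>R. a * u R + w R) S = a * signed_adjacency C u S + signed_adjacency C w S"
  unfolding signed_adjacency_def by (simp add: sum.distrib sum_distrib_left algebra_simps)

lemma signed_adjacency_square:
  assumes "finite C" "finite S"
  shows "signed_adjacency C (signed_adjacency C v) S = real (card C) * v S"
proof -
  define G where "G i j = sign_below S i * sign_below (flip S {i}) j * v (flip (flip S {i}) {j})" for i j
  define H where "H i j = (if i = j then 0 else G i j)" for i j
  have antisym: "H j i = - H i j" for i j
  proof (cases "i = j")
    case False
    then have "sign_below S j * sign_below (flip S {j}) i = - (sign_below S i * sign_below (flip S {i}) j)"
      using sign_below_flip[OF assms(2), of i j] sign_below_flip[OF assms(2), of j i] by auto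
    then show ?thesis using False unfolding H_def G_def by (simp add: flip_singleton_commute)
  qed (simp add: H_def)
  have "(\<Sum>i\<in>C. \<Sum>j\<in>C. H i j) = (\<Sum>j\<in>C. \<Sum>i\<in>C. - H j i)"
    by (subst sum.swap) (use antisym in \<open>intro sum.cong refl, metis\<close>)
  then have cancel: "(\<Sum>i\<in>C. \<Sum>j\<in>C. H i j) = 0" by (simp add: sum_negf)
  have row: "(\<Sum>j\<in>C. G i j) = v S + (\<Sum>j\<in>C. H i j)" if "i \<in> C" for i
  proof -
    have "G i i = v S"
      unfolding G_def by (simp add: sign_below_flip_self sign_below_square flip_singleton_flip_singleton)
    moreover have "(\<Sum>j\<in>C - {i}. H i j) = (\<Sum>j\<in>C - {i}. G i j)"
      unfolding H_def by (intro sum.cong) auto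
    ultimately show ?thesis
      using that assms by (simp add: sum.remove H_def)
  qed
  have "signed_adjacency C (signed_adjacency C v) S = (\<Sum>i\<in>C. \<Sum>j\<in>C. G i j)"
    unfolding signed_adjacency_def G_def by (simp add: sum_distrib_left mult.assoc)
  also have "\<dots> = (\<Sum>i\<in>C. v S + (\<Sum>j\<in>C. H i j))" by (intro sum.cong) (auto simp: row)
  also have "\<dots> = real (card C) * v S" using cancel by (simp add: sum.distrib)
  finally show ?thesis .
qed

lemma signed_adjacency_shifted_eigenvector:
  assumes "finite C" "finite R"
  shows "signed_adjacency C (\<lambda>S. sqrt (card C) * u S + signed_adjacency C u S) R
    = sqrt (card C) * (sqrt (card C) * u R + signed_adjacency C u R)"
  unfolding signed_adjacency_linear signed_adjacency_square[OF assms] by (simp add: algebra_simps)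

lemma signed_adjacency_insert:
  assumes "finite C" "c \<in> C" "c \<notin> S" and zero: "\<And>R. c \<in> R \<Longrightarrow> u R = 0"
  shows "signed_adjacency C u (insert c S) = sign_below (insert c S) c * u S"
proof -
  have "u (flip (insert c S) {i}) = 0" if "i \<in> C - {c}" for i
    using that zero unfolding flip_def by auto
  moreover have "flip (insert c S) {c} = S" using assms(3) unfolding flip_def by auto
  ultimately show ?thesis unfolding signed_adjacency_def using assms(1,2) by (simp add: sum.remove)
qed

lemma shifted_signed_adjacency_matrix:
  assumes "finite I"
  shows "c * (if R \<in> I then y R else 0) + signed_adjacency C (\<lambda>S. if S \<in> I then y S else 0) R
    = (\<Sum>S\<in>I. ((if S = R then c else 0)
        + (\<Sum>i\<in>C. if S = flip R {i} then sign_below R i else 0)) * y S)"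
proof -
  have "(\<Sum>S\<in>I. ((if S = R then c else 0) + (\<Sum>i\<in>C. if S = flip R {i} then sign_below R i else 0)) * y S)
      = (\<Sum>S\<in>I. if S = R then c * y S else 0)
        + (\<Sum>i\<in>C. \<Sum>S\<in>I. if S = flip R {i} then sign_below R i * y S else 0)"
    unfolding distrib_right sum_distrib_right sum.distrib
    by (subst sum.swap) (intro arg_cong2[where f = "(+)"] sum.cong; simp)
  also have "(\<Sum>S\<in>I. if S = R then c * y S else 0) = c * (if R \<in> I then y R else 0)"
    using assms by (simp add: sum.delta)
  also have "(\<Sum>i\<in>C. \<Sum>S\<in>I. if S = flip R {i} then sign_below R i * y S else 0)
      = signed_adjacency C (\<lambda>S. if S \<in> I then y S else 0) R"
    unfolding signed_adjacency_def using assms by (simp add: sum.delta) (intro sum.cong; simp)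
  finally show ?thesis by simp
qed

text \<open>Every \<open>\<surd>m u + A u\<close> is a \<open>\<surd>m\<close>-eigenvector of \<open>A = signed_adjacency C\<close>, \<open>m = card C\<close>.
  Taking \<open>u\<close> supported on the \<open>2\<^sup>m\<^sup>-\<^sup>1\<close> sets avoiding some \<open>c \<in> C\<close> and solving the fewer than
  \<open>2\<^sup>m\<^sup>-\<^sup>1\<close> linear conditions "vanish outside \<open>H\<close>" gives a nonzero such eigenvector.\<close>

lemma signed_adjacency_eigenvector_in:
  assumes fC: "finite C" and "C \<noteq> {}" and HC: "H \<subseteq> Pow C" and big: "2 ^ card C < 2 * card H"
  obtains v where "\<And>R. R \<in> Pow C - H \<Longrightarrow> v R = 0" and "\<exists>R\<in>Pow C. v R \<noteq> 0"
    and "\<And>R. finite R \<Longrightarrow> signed_adjacency C v R = sqrt (card C) * v R"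
proof -
  define m where "m = card C"
  obtain c where cC: "c \<in> C" using assms by blast
  define I where "I = Pow (C - {c})"
  define J where "J = Pow C - H"
  have "card I = 2 ^ (m - 1)" unfolding I_def m_def using fC cC by (simp add: card_Pow)
  moreover have "card J = 2 ^ m - card H"
    unfolding J_def m_def using HC fC by (simp add: card_Diff_subset card_Pow finite_subset)
  moreover have "(2::nat) ^ m = 2 * 2 ^ (m - 1)"
    using assms unfolding m_def by (metis card_gt_0_iff Suc_diff_1 power_Suc)
  moreover have "0 < (2::nat) ^ (m - 1)" by simp
  ultimately have "card J < card I" using big unfolding m_def by linarith
  define a where "a R S = (if S = R then sqrt m else 0) + (\<Sum>i\<in>C. if S = flip R {i} then sign_below R i else 0)"
    for R S
  obtain y where ynz: "\<exists>S\<in>I. y S \<noteq> 0" and ysol: "\<And>R. R \<in> J \<Longrightarrow> (\<Sum>S\<in>I. a R S * y S) = 0"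
    using homogeneous_system_nontrivial_solution[of J I a] \<open>card J < card I\<close> fC
    unfolding I_def J_def by auto
  define u where "u S = (if S \<in> I then y S else 0)" for S
  define v where "v R = sqrt m * u R + signed_adjacency C u R" for R
  have "v R = (\<Sum>S\<in>I. a R S * y S)" for R
    unfolding v_def u_def a_def using fC
    by (intro shifted_signed_adjacency_matrix) (simp add: I_def)
  then have "v R = 0" if "R \<in> J" for R using ysol that by simp
  moreover have "signed_adjacency C v R = sqrt (card C) * v R" if "finite R" for R
    unfolding v_def m_def using signed_adjacency_shifted_eigenvector[OF fC that] by simp
  moreover have "\<exists>R\<in>Pow C. v R \<noteq> 0"
  proof -
    obtain S where S: "S \<in> I" "y S \<noteq> 0" using ynz by blast
    have cS: "c \<notin> S" "S \<subseteq> C" using S unfolding I_def by auto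
    have "u R = 0" if "c \<in> R" for R using that unfolding u_def I_def by auto
    then have "v (insert c S) = sign_below (insert c S) c * y S"
      unfolding v_def using signed_adjacency_insert[OF fC cC cS(1)] S by (simp add: u_def)
    then have "v (insert c S) \<noteq> 0" using S abs_sign_below[of "insert c S" c] by auto
    then show ?thesis using cS cC by blast
  qed
  ultimately show ?thesis using that unfolding J_def by blast
qed

text \<open>At a vertex where \<open>|v|\<close> is maximal, \<open>\<surd>m |v| = |A v| \<le> (number of neighbours in H) |v|\<close>,
  because \<open>v\<close> vanishes outside \<open>H\<close>.\<close>

lemma eigenvector_max_has_many_neighbours:
  assumes fC: "finite C"
    and zero: "\<And>R. R \<in> Pow C - H \<Longrightarrow> v R = 0" and nonzero: "\<exists>R\<in>Pow C. v R \<noteq> 0"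
    and eigen: "\<And>R. finite R \<Longrightarrow> signed_adjacency C v R = sqrt (card C) * v R"
  shows "\<exists>Q\<in>H. card C \<le> (card {i\<in>C. flip Q {i} \<in> H}) ^ 2"
proof -
  define M where "M = Max ((\<lambda>R. \<bar>v R\<bar>) ` Pow C)"
  have Mmax: "\<bar>v R\<bar> \<le> M" if "R \<in> Pow C" for R unfolding M_def using fC that by (intro Max_ge) auto
  have "M \<in> (\<lambda>R. \<bar>v R\<bar>) ` Pow C" unfolding M_def using fC by (intro Max_in) auto
  then obtain Q where Q: "Q \<subseteq> C" "\<bar>v Q\<bar> = M" by blast
  obtain R where "R \<in> Pow C" "v R \<noteq> 0" using nonzero by blast
  then have Mpos: "M > 0" using Mmax[of R] by simp
  have "Q \<in> H"
  proof (rule ccontr)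
    assume "Q \<notin> H"
    then show False using zero[of Q] Q Mpos by simp
  qed
  define D where "D = {i\<in>C. flip Q {i} \<in> H}"
  have flipC: "flip Q {i} \<in> Pow C" if "i \<in> C" for i using Q that unfolding flip_def by auto
  have "sqrt (card C) * M = \<bar>signed_adjacency C v Q\<bar>"
    using eigen[of Q] Q fC by (simp add: abs_mult finite_subset)
  also have "\<dots> \<le> (\<Sum>i\<in>C. \<bar>sign_below Q i * v (flip Q {i})\<bar>)"
    unfolding signed_adjacency_def by (rule sum_abs)
  also have "\<dots> = (\<Sum>i\<in>C. \<bar>v (flip Q {i})\<bar>)" by (simp add: abs_mult abs_sign_below)
  also have "\<dots> = (\<Sum>i\<in>D. \<bar>v (flip Q {i})\<bar>)"
    unfolding D_def using fC zero flipC by (intro sum.mono_neutral_right) auto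
  also have "\<dots> \<le> (\<Sum>i\<in>D. M)" unfolding D_def using Mmax flipC by (intro sum_mono) auto
  also have "\<dots> = real (card D) * M" by simp
  finally have "sqrt (card C) \<le> real (card D)" using Mpos by simp
  then have "real (card C) \<le> real (card D) ^ 2"
    using real_sqrt_le_iff[of "card C" "real (card D) ^ 2"] by simp
  then show ?thesis using \<open>Q \<in> H\<close> unfolding D_def by (metis of_nat_le_iff of_nat_power)
qed

theorem huang_sensitivity:
  assumes "finite C" "H \<subseteq> Pow C" "2 ^ card C < 2 * card H"
  shows "\<exists>Q\<in>H. card C \<le> (card {i\<in>C. flip Q {i} \<in> H}) ^ 2"
proof (cases "C = {}")
  case True
  have "H \<noteq> {}" using assms(3) by auto
  then show ?thesis using True by auto
next
  case False
  obtain v where "\<And>R. R \<in> Pow C - H \<Longrightarrow> v R = 0" "\<exists>R\<in>Pow C. v R \<noteq> 0"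
    "\<And>R. finite R \<Longrightarrow> signed_adjacency C v R = sqrt (card C) * v R"
    using signed_adjacency_eigenvector_in[OF assms(1) False assms(2,3)] by blast
  then show ?thesis by (intro eigenvector_max_has_many_neighbours[OF assms(1)])
qed

section \<open>Degree at most sensitivity squared\<close>

definition moebius :: "(nat set \<Rightarrow> real) \<Rightarrow> nat set \<Rightarrow> real" where
  "moebius g R = (\<Sum>Q\<in>Pow R. (-1) ^ card Q * g Q)"

lemma moebius_inversion: "finite S \<Longrightarrow> g S = (\<Sum>T\<in>Pow S. (-1) ^ card T * moebius g T)"
  using inclusion_exclusion_symmetric[of "moebius g" g S] unfolding moebius_def by simp

lemma sum_Pow_power_minus_one_card:
  assumes "finite R" "R \<noteq> {}"
  shows "(\<Sum>Q\<in>Pow R. (-1::real) ^ card Q) = 0"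
proof -
  have "card {T. T \<subseteq> R \<and> {} \<subseteq> T \<and> even (card T)} = card {T. T \<subseteq> R \<and> {} \<subseteq> T \<and> odd (card T)}"
    using assms by (intro card_subsupersets_even_odd) auto
  then show ?thesis using assms by (intro sum_alternating_cancels) auto
qed

lemma sign_sum_nonzero_imp_majority:
  fixes h :: "'a \<Rightarrow> real"
  assumes "finite A" and pm: "\<And>x. x \<in> A \<Longrightarrow> h x = 1 \<or> h x = -1" and "sum h A \<noteq> 0"
  shows "\<exists>e. card A < 2 * card {x\<in>A. h x = e}"
proof -
  define P where "P = {x\<in>A. h x = 1}"
  define M where "M = {x\<in>A. h x = -1}"
  have A: "A = P \<union> M" and disj: "P \<inter> M = {}" and fin: "finite P" "finite M"
    using pm \<open>finite A\<close> unfolding P_def M_def by auto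
  have "card A = card P + card M" unfolding A using fin disj by (rule card_Un_disjoint)
  moreover have "sum h A = sum h P + sum h M" unfolding A using fin disj by (rule sum.union_disjoint)
  moreover have "sum h P = real (card P)" "sum h M = - real (card M)" unfolding P_def M_def by simp_all
  ultimately have "card A < 2 * card P \<or> card A < 2 * card M" using assms(3) by linarith
  then show ?thesis unfolding P_def M_def by blast
qed

definition parity_colour :: "(nat set \<Rightarrow> bool) \<Rightarrow> nat set \<Rightarrow> real" where
  "parity_colour P Q = (-1) ^ card Q * (if P Q then 1 else -1)"

lemma parity_colour_cases: "parity_colour P Q = 1 \<or> parity_colour P Q = -1"
  unfolding parity_colour_def by (cases "even (card Q)") auto

lemma parity_colour_flip_singleton_eq_imp:
  assumes "finite Q" "parity_colour P (flip Q {i}) = parity_colour P Q"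
  shows "P (flip Q {i}) \<noteq> P Q"
proof
  assume "P (flip Q {i}) = P Q"
  then have "parity_colour P Q = - parity_colour P Q"
    using assms power_minus_one_card_flip_singleton[OF assms(1), of i] unfolding parity_colour_def by simp
  then show False using parity_colour_cases[of P Q] by simp
qed

lemma sum_parity_colour:
  assumes "finite R" "R \<noteq> {}"
  shows "(\<Sum>Q\<in>Pow R. parity_colour P Q) = 2 * moebius (\<lambda>Q. of_bool (P Q)) R"
proof -
  have "parity_colour P Q = 2 * ((-1) ^ card Q * of_bool (P Q)) - (-1) ^ card Q" for Q
    unfolding parity_colour_def by simp
  then show ?thesis
    using sum_Pow_power_minus_one_card[OF assms] unfolding moebius_def
    by (simp add: sum_subtractf sum_distrib_left)
qed

text \<open>By \<open>sum_parity_colour\<close> one colour class contains more than half of the cube \<open>Pow R\<close>, and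
  neighbours within a class have different values of \<open>P\<close>; now apply Huang's theorem to that class.\<close>

lemma moebius_nonzero_imp_sensitive_vertex:
  assumes fR: "finite R" and nz: "moebius (\<lambda>Q. of_bool (P Q)) R \<noteq> 0"
  shows "\<exists>Q\<subseteq>R. card R \<le> (card {i\<in>R. P (flip Q {i}) \<noteq> P Q}) ^ 2"
proof (cases "R = {}")
  case False
  then have "(\<Sum>Q\<in>Pow R. parity_colour P Q) \<noteq> 0" using nz sum_parity_colour[OF fR] by simp
  then obtain e where "card (Pow R) < 2 * card {Q\<in>Pow R. parity_colour P Q = e}"
    using sign_sum_nonzero_imp_majority[of "Pow R"] parity_colour_cases fR by blast
  then have big: "2 ^ card R < 2 * card {Q\<in>Pow R. parity_colour P Q = e}" using fR by (simp add: card_Pow)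
  define H where "H = {Q\<in>Pow R. parity_colour P Q = e}"
  obtain Q where Q: "Q \<in> H" and many: "card R \<le> (card {i\<in>R. flip Q {i} \<in> H}) ^ 2"
    using huang_sensitivity[OF fR _ big] unfolding H_def by blast
  have QR: "Q \<subseteq> R" using Q unfolding H_def by simp
  then have "finite Q" using fR finite_subset by blast
  then have "{i\<in>R. flip Q {i} \<in> H} \<subseteq> {i\<in>R. P (flip Q {i}) \<noteq> P Q}"
    using Q parity_colour_flip_singleton_eq_imp unfolding H_def by auto
  then have "card {i\<in>R. flip Q {i} \<in> H} \<le> card {i\<in>R. P (flip Q {i}) \<noteq> P Q}"
    using fR by (intro card_mono) auto
  then have "card {i\<in>R. flip Q {i} \<in> H} ^ 2 \<le> card {i\<in>R. P (flip Q {i}) \<noteq> P Q} ^ 2"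
    by (rule power_mono) simp
  then show ?thesis using QR order_trans[OF many] by blast
qed auto

lemma finite_cube: "finite (cube n)"
  unfolding cube_def by simp

lemma flip_in_cube: "x \<in> cube n \<Longrightarrow> Q \<subseteq> {1..n} \<Longrightarrow> flip x Q \<in> cube n"
  unfolding cube_def flip_def by auto

lemma sens_at_le_sensitivity: "x \<in> cube n \<Longrightarrow> sens_at n f x \<le> sensitivity n f"
  unfolding sensitivity_def using finite_cube by (intro Max_ge) auto

text \<open>Combined with Moebius inversion: \<open>f\<close> has degree at most \<open>s(f)\<^sup>2\<close> around every point.\<close>

lemma moebius_vanishes_above_sensitivity_square:
  assumes x: "x \<in> cube n" and R: "R \<subseteq> {1..n}" and big: "sensitivity n f ^ 2 < card R"
  shows "moebius (\<lambda>Q. of_bool (f (flip x Q) \<noteq> f x)) R = 0"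
proof (rule ccontr)
  assume nz: "moebius (\<lambda>Q. of_bool (f (flip x Q) \<noteq> f x)) R \<noteq> 0"
  have fR: "finite R" using R finite_subset by blast
  define D where "D Q = {i\<in>R. (f (flip x (flip Q {i})) \<noteq> f x) \<noteq> (f (flip x Q) \<noteq> f x)}" for Q
  obtain Q where Q: "Q \<subseteq> R" and many: "card R \<le> card (D Q) ^ 2"
    using moebius_nonzero_imp_sensitive_vertex[OF fR nz] unfolding D_def by auto
  have "D Q \<subseteq> {i\<in>{1..n}. f (flip x Q) \<noteq> f (flip (flip x Q) {i})}"
    unfolding D_def flip_flip using R by auto
  then have "card (D Q) \<le> sens_at n f (flip x Q)"
    unfolding sens_at_def by (intro card_mono) auto
  also have "\<dots> \<le> sensitivity n f"
    using Q R x by (intro sens_at_le_sensitivity flip_in_cube) auto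
  finally have "card (D Q) ^ 2 \<le> sensitivity n f ^ 2" by (rule power_mono) simp
  then show False using many big by linarith
qed

section \<open>Symmetrization over blocks\<close>

lemma card_supsets_with_card:
  assumes fA: "finite A" and VA: "V \<subseteq> A" and Vk: "card V \<le> k"
  shows "card {Y. Y \<subseteq> A \<and> card Y = k \<and> V \<subseteq> Y} = (card A - card V) choose (k - card V)"
proof -
  have fV: "finite V" using fA VA finite_subset by blast
  have "bij_betw (\<lambda>Y. Y - V) {Y. Y \<subseteq> A \<and> card Y = k \<and> V \<subseteq> Y} {Z. Z \<subseteq> A - V \<and> card Z = k - card V}"
  proof (rule bij_betw_byWitness[where f' = "\<lambda>Z. Z \<union> V"])
    show "(\<lambda>Y. Y - V) ` {Y. Y \<subseteq> A \<and> card Y = k \<and> V \<subseteq> Y} \<subseteq> {Z. Z \<subseteq> A - V \<and> card Z = k - card V}"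
      using fA fV by (auto simp: card_Diff_subset finite_subset)
    show "(\<lambda>Z. Z \<union> V) ` {Z. Z \<subseteq> A - V \<and> card Z = k - card V} \<subseteq> {Y. Y \<subseteq> A \<and> card Y = k \<and> V \<subseteq> Y}"
    proof
      fix Y assume "Y \<in> (\<lambda>Z. Z \<union> V) ` {Z. Z \<subseteq> A - V \<and> card Z = k - card V}"
      then obtain Z where Z: "Z \<subseteq> A - V" "card Z = k - card V" "Y = Z \<union> V" by blast
      have "card (Z \<union> V) = card Z + card V"
        using Z fA fV by (intro card_Un_disjoint) (auto simp: finite_subset)
      then show "Y \<in> {Y. Y \<subseteq> A \<and> card Y = k \<and> V \<subseteq> Y}" using Z VA Vk by auto
    qed
  qed auto
  then have "card {Y. Y \<subseteq> A \<and> card Y = k \<and> V \<subseteq> Y} = card {Z. Z \<subseteq> A - V \<and> card Z = k - card V}"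
    by (rule bij_betw_same_card)
  also have "\<dots> = card (A - V) choose (k - card V)" using fA by (intro n_subsets) simp
  finally show ?thesis using VA fV by (simp add: card_Diff_subset)
qed

text \<open>After division by \<open>t choose k\<close>, a polynomial of degree \<open>card V\<close> in \<open>k\<close>.\<close>

lemma card_supsets_with_card_choose:
  assumes V: "V \<subseteq> {..<t}" and k: "k \<le> t"
  shows "real (card {Y. Y \<subseteq> {..<t} \<and> card Y = k \<and> V \<subseteq> Y})
    = real (t choose k) * (real (k choose card V) / real (t choose card V))"
proof (cases "card V \<le> k")
  case True
  have "card V \<le> t" using V by (metis card_lessThan card_mono finite_lessThan)
  then have "real (t choose card V) \<noteq> 0" by simp
  moreover have "real (t choose k) * real (k choose card V) = real (t choose card V) * real ((t - card V) choose (k - card V))"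
    using choose_mult[OF True k] by (metis of_nat_mult)
  ultimately show ?thesis
    using card_supsets_with_card[OF _ V True] by (simp add: field_simps)
next
  case False
  have "card V \<le> card Y" if "Y \<subseteq> {..<t}" "V \<subseteq> Y" for Y
    using that by (meson card_mono finite_lessThan finite_subset)
  then have empty: "{Y. Y \<subseteq> {..<t} \<and> card Y = k \<and> V \<subseteq> Y} = {}" using False by auto
  show ?thesis unfolding empty using False by simp
qed

lemma sum_subsets_if_supset:
  fixes c :: real
  assumes "finite A"
  shows "(\<Sum>Y\<in>{Y. Y \<subseteq> A \<and> card Y = k}. if V \<subseteq> Y then c else 0)
    = c * real (card {Y. Y \<subseteq> A \<and> card Y = k \<and> V \<subseteq> Y})"
proof -
  have "{Y. Y \<subseteq> A \<and> card Y = k} \<subseteq> Pow A" by auto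
  then have "finite {Y. Y \<subseteq> A \<and> card Y = k}" using assms by (simp add: finite_subset)
  then have "(\<Sum>Y\<in>{Y. Y \<subseteq> A \<and> card Y = k}. if V \<subseteq> Y then c else 0)
      = (\<Sum>Y\<in>{Y\<in>{Y. Y \<subseteq> A \<and> card Y = k}. V \<subseteq> Y}. c)"
    by (intro sum.inter_filter[symmetric])
  also have "{Y\<in>{Y. Y \<subseteq> A \<and> card Y = k}. V \<subseteq> Y} = {Y. Y \<subseteq> A \<and> card Y = k \<and> V \<subseteq> Y}" by auto
  finally show ?thesis by simp
qed

lemma subset_Union_blocks_iff:
  assumes disj: "\<And>j k. j < t \<Longrightarrow> k < t \<Longrightarrow> j \<noteq> k \<Longrightarrow> B j \<inter> B k = {}"
    and Y: "Y \<subseteq> {..<t}" and T: "T \<subseteq> \<Union>(B ` {..<t})"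
  shows "T \<subseteq> \<Union>(B ` Y) \<longleftrightarrow> {j\<in>{..<t}. B j \<inter> T \<noteq> {}} \<subseteq> Y"
proof
  assume TY: "T \<subseteq> \<Union>(B ` Y)"
  show "{j\<in>{..<t}. B j \<inter> T \<noteq> {}} \<subseteq> Y"
  proof
    fix j assume "j \<in> {j\<in>{..<t}. B j \<inter> T \<noteq> {}}"
    then obtain r where r: "r \<in> B j" "r \<in> T" "j < t" by auto
    then obtain j' where j': "j' \<in> Y" "r \<in> B j'" using TY by auto
    then have "j = j'" using disj[of j j'] r Y by auto
    then show "j \<in> Y" using j' by simp
  qed
next
  assume VY: "{j\<in>{..<t}. B j \<inter> T \<noteq> {}} \<subseteq> Y"
  show "T \<subseteq> \<Union>(B ` Y)"
  proof
    fix r assume "r \<in> T"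
    then obtain j where "j < t" "r \<in> B j" using T by auto
    then show "r \<in> \<Union>(B ` Y)" using VY \<open>r \<in> T\<close> by blast
  qed
qed

lemma card_blocks_meeting_le:
  assumes disj: "\<And>j k. j < t \<Longrightarrow> k < t \<Longrightarrow> j \<noteq> k \<Longrightarrow> B j \<inter> B k = {}" and "finite T"
  shows "card {j\<in>{..<t}. B j \<inter> T \<noteq> {}} \<le> card T"
proof -
  define r where "r j = (SOME q. q \<in> B j \<inter> T)" for j
  have r: "r j \<in> B j \<inter> T" if "j \<in> {j\<in>{..<t}. B j \<inter> T \<noteq> {}}" for j
  proof -
    have "\<exists>q. q \<in> B j \<inter> T" using that by auto
    then show ?thesis unfolding r_def by (rule someI_ex)
  qed
  have "inj_on r {j\<in>{..<t}. B j \<inter> T \<noteq> {}}"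
  proof (rule inj_onI)
    fix i j assume i: "i \<in> {j\<in>{..<t}. B j \<inter> T \<noteq> {}}" and j: "j \<in> {j\<in>{..<t}. B j \<inter> T \<noteq> {}}"
      and "r i = r j"
    then have "r i \<in> B i \<inter> B j" using r[OF i] r[OF j] by simp
    then show "i = j" using disj[of i j] i j by auto
  qed
  moreover have "r ` {j\<in>{..<t}. B j \<inter> T \<noteq> {}} \<subseteq> T" using r by auto
  ultimately show ?thesis using \<open>finite T\<close> by (rule card_inj_on_le)
qed

lemma moebius_expansion_Union_blocks:
  assumes disj: "\<And>j k. j < t \<Longrightarrow> k < t \<Longrightarrow> j \<noteq> k \<Longrightarrow> B j \<inter> B k = {}"
    and fin: "finite (\<Union>(B ` {..<t}))" and Y: "Y \<subseteq> {..<t}"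
  shows "g (\<Union>(B ` Y)) = (\<Sum>T\<in>Pow (\<Union>(B ` {..<t})).
    if {j\<in>{..<t}. B j \<inter> T \<noteq> {}} \<subseteq> Y then (-1) ^ card T * moebius g T else 0)"
proof -
  have sub: "\<Union>(B ` Y) \<subseteq> \<Union>(B ` {..<t})" using Y by auto
  have "(\<Sum>T\<in>Pow (\<Union>(B ` {..<t})). if {j\<in>{..<t}. B j \<inter> T \<noteq> {}} \<subseteq> Y then (-1) ^ card T * moebius g T else 0)
      = (\<Sum>T\<in>{T \<in> Pow (\<Union>(B ` {..<t})). {j\<in>{..<t}. B j \<inter> T \<noteq> {}} \<subseteq> Y}. (-1) ^ card T * moebius g T)"
    using fin by (intro sum.inter_filter[symmetric]) simp
  also have "{T \<in> Pow (\<Union>(B ` {..<t})). {j\<in>{..<t}. B j \<inter> T \<noteq> {}} \<subseteq> Y} = Pow (\<Union>(B ` Y))"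
  proof (intro set_eqI iffI)
    fix T assume "T \<in> {T \<in> Pow (\<Union>(B ` {..<t})). {j\<in>{..<t}. B j \<inter> T \<noteq> {}} \<subseteq> Y}"
    then show "T \<in> Pow (\<Union>(B ` Y))" using subset_Union_blocks_iff[OF disj Y, where T = T] by simp
  next
    fix T assume T: "T \<in> Pow (\<Union>(B ` Y))"
    then have "T \<subseteq> \<Union>(B ` {..<t})" using sub by simp
    then show "T \<in> {T \<in> Pow (\<Union>(B ` {..<t})). {j\<in>{..<t}. B j \<inter> T \<noteq> {}} \<subseteq> Y}"
      using subset_Union_blocks_iff[OF disj Y, where T = T] T by simp
  qed
  also have "(\<Sum>T\<in>Pow (\<Union>(B ` Y)). (-1) ^ card T * moebius g T) = g (\<Union>(B ` Y))"
    using fin sub by (intro moebius_inversion[symmetric]) (rule finite_subset)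
  finally show ?thesis by simp
qed

text \<open>Minsky--Papert symmetrization over blocks: averaging \<open>g\<close> over unions of \<open>k\<close> of the blocks
  yields a function of \<open>k\<close> of degree at most \<open>d\<close>, since each Moebius term contributes
  \<open>binom k v / binom t v\<close>, where \<open>v \<le> |T| \<le> d\<close> is the number of blocks met by its support \<open>T\<close>.\<close>

lemma symmetrization_over_blocks:
  assumes disj: "\<And>j k. j < t \<Longrightarrow> k < t \<Longrightarrow> j \<noteq> k \<Longrightarrow> B j \<inter> B k = {}"
    and fin: "finite (\<Union>(B ` {..<t}))"
    and low: "\<And>T. T \<subseteq> \<Union>(B ` {..<t}) \<Longrightarrow> d < card T \<Longrightarrow> moebius g T = 0"
  obtains p where "degree_le d p"
    and "\<And>k. k \<le> t \<Longrightarrow> real (t choose k) * p k = (\<Sum>Y\<in>{Y. Y \<subseteq> {..<t} \<and> card Y = k}. g (\<Union>(B ` Y)))"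
proof
  define W where "W = \<Union>(B ` {..<t})"
  define V where "V T = {j\<in>{..<t}. B j \<inter> T \<noteq> {}}" for T
  define c where "c T = (-1) ^ card T * moebius g T" for T
  define p where "p k = (\<Sum>T\<in>Pow W. c T * (real (k choose card (V T)) / real (t choose card (V T))))" for k
  show "degree_le d p"
    unfolding p_def
  proof (intro degree_le_sum)
    fix T assume T: "T \<in> Pow W"
    show "degree_le d (\<lambda>k. c T * (real (k choose card (V T)) / real (t choose card (V T))))"
    proof (cases "d < card T")
      case True
      then show ?thesis using low T unfolding c_def W_def by (simp add: degree_le_const)
    next
      case False
      have "finite T" using T fin unfolding W_def by (auto intro: finite_subset)
      then have "card (V T) \<le> card T" unfolding V_def using disj by (intro card_blocks_meeting_le) auto
      then show ?thesis using False by (intro degree_le_scaled_binomial) linarith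
    qed
  qed (simp add: W_def fin)
  fix k assume k: "k \<le> t"
  let ?S = "{Y. Y \<subseteq> {..<t} \<and> card Y = k}"
  have "(\<Sum>Y\<in>?S. g (\<Union>(B ` Y))) = (\<Sum>Y\<in>?S. \<Sum>T\<in>Pow W. if V T \<subseteq> Y then c T else 0)"
    unfolding V_def c_def W_def using moebius_expansion_Union_blocks[OF disj fin] by simp
  also have "\<dots> = (\<Sum>T\<in>Pow W. \<Sum>Y\<in>?S. if V T \<subseteq> Y then c T else 0)" by (rule sum.swap)
  also have "\<dots> = (\<Sum>T\<in>Pow W. c T * real (card {Y. Y \<subseteq> {..<t} \<and> card Y = k \<and> V T \<subseteq> Y}))"
    by (rule sum.cong[OF refl], rule sum_subsets_if_supset) simp
  also have "\<dots> = real (t choose k) * p k"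
    unfolding p_def sum_distrib_left
  proof (intro sum.cong refl)
    fix T
    have VT: "V T \<subseteq> {..<t}" unfolding V_def by auto
    show "c T * real (card {Y. Y \<subseteq> {..<t} \<and> card Y = k \<and> V T \<subseteq> Y})
        = real (t choose k) * (c T * (real (k choose card (V T)) / real (t choose card (V T))))"
      unfolding card_supsets_with_card_choose[OF VT k] by simp
  qed
  finally show "real (t choose k) * p k = (\<Sum>Y\<in>?S. g (\<Union>(B ` Y)))" by simp
qed

section \<open>Block sensitivity\<close>

lemma mean_in_unit_interval:
  fixes g :: "'a \<Rightarrow> real"
  assumes "finite A" "A \<noteq> {}" "\<And>x. 0 \<le> g x \<and> g x \<le> 1" "real (card A) * c = (\<Sum>x\<in>A. g x)"
  shows "0 \<le> c \<and> c \<le> 1"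
proof -
  have "0 \<le> real (card A) * c" "real (card A) * c \<le> real (card A) * 1"
    using assms(3,4) sum_nonneg[of A g] sum_mono[of A g "\<lambda>_. 1"] by auto
  moreover have "0 < real (card A)" using assms(1,2) by (simp add: card_gt_0_iff)
  ultimately show ?thesis by (simp add: zero_le_mult_iff mult_le_cancel_left_pos)
qed

lemma sensitive_blocks_le:
  assumes x: "x \<in> cube n"
    and blocks: "\<forall>j<t. B j \<noteq> {} \<and> B j \<subseteq> {1..n} \<and> f x \<noteq> f (flip x (B j))"
    and disj: "\<forall>j<t. \<forall>k<t. j \<noteq> k \<longrightarrow> B j \<inter> B k = {}"
  shows "t \<le> 2 * sensitivity n f ^ 4"
proof (cases "t = 0")
  case False
  define s where "s = sensitivity n f"
  define g :: "nat set \<Rightarrow> real" where "g Q = of_bool (f (flip x Q) \<noteq> f x)" for Q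
  let ?S = "\<lambda>k. {Y. Y \<subseteq> {..<t} \<and> card Y = k}"
  have disj': "\<And>j k. j < t \<Longrightarrow> k < t \<Longrightarrow> j \<noteq> k \<Longrightarrow> B j \<inter> B k = {}" using disj by blast
  have W: "\<Union>(B ` {..<t}) \<subseteq> {1..n}" using blocks by auto
  then have fin: "finite (\<Union>(B ` {..<t}))" by (rule finite_subset) simp
  have low: "moebius g T = 0" if "T \<subseteq> \<Union>(B ` {..<t})" "s ^ 2 < card T" for T
    unfolding g_def using that W x unfolding s_def by (intro moebius_vanishes_above_sensitivity_square) auto
  obtain p where deg: "degree_le (s ^ 2) p"
    and avg: "\<And>k. k \<le> t \<Longrightarrow> real (t choose k) * p k = (\<Sum>Y\<in>?S k. g (\<Union>(B ` Y)))"
    using symmetrization_over_blocks[OF disj' fin low] by blast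
  have card_S: "card (?S k) = t choose k" for k using n_subsets[of "{..<t}" k] by simp
  have "0 \<le> p k \<and> p k \<le> 1" if k: "k \<le> t" for k
  proof (rule mean_in_unit_interval)
    show "finite (?S k)" by (rule finite_subset[of _ "Pow {..<t}"]) auto
    show "?S k \<noteq> {}" using card_S[of k] k by (metis card.empty zero_less_binomial_iff less_irrefl)
    show "0 \<le> g Y \<and> g Y \<le> 1" for Y unfolding g_def by simp
  qed (use avg[OF k] card_S in simp)
  moreover have "p 0 = 0"
  proof -
    have "Y = {}" if "Y \<subseteq> {..<t}" "card Y = 0" for Y :: "nat set"
      using that finite_subset[OF that(1)] by simp
    then have "?S 0 = {{}}" by auto
    then show ?thesis using avg[of 0] by (simp add: g_def flip_def)
  qed
  moreover have "p 1 = 1"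
  proof -
    have "g (\<Union>(B ` Y)) = 1" if "Y \<in> ?S 1" for Y
    proof -
      have "card Y = 1" using that by simp
      then obtain j where "Y = {j}" by (rule card_1_singletonE)
      then show ?thesis using that blocks unfolding g_def by auto
    qed
    then have "real t * p 1 = real t" using avg[of 1] False card_S[of 1] by simp
    then show ?thesis using False by simp
  qed
  ultimately have "t \<le> 2 * (s ^ 2) ^ 2" by (intro discrete_Markov_inequality[OF deg])
  then show ?thesis unfolding s_def by (simp flip: power_mult)
qed simp

theorem mainTheorem3:
  fixes n :: nat and f :: "nat set \<Rightarrow> bool"
  assumes "n \<ge> 1"
  shows "block_sensitivity n f \<le> 2 * sensitivity n f ^ 4"
proof -
  define S where "S = {t. \<exists>x \<in> cube n. \<exists>B :: nat \<Rightarrow> nat set.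
      (\<forall>j<t. B j \<noteq> {} \<and> B j \<subseteq> {1..n} \<and> f x \<noteq> f (flip x (B j))) \<and>
      (\<forall>j<t. \<forall>k<t. j \<noteq> k \<longrightarrow> B j \<inter> B k = {})}"
  have bound: "t \<le> 2 * sensitivity n f ^ 4" if "t \<in> S" for t
    using that sensitive_blocks_le unfolding S_def by blast
  have "{} \<in> cube n" unfolding cube_def by simp
  then have "S \<noteq> {}" unfolding S_def by blast
  moreover have "finite S" using bound by (meson finite_nat_set_iff_bounded_le)
  ultimately have "Max S \<le> 2 * sensitivity n f ^ 4" using bound by (simp add: Max_le_iff)
  then show ?thesis unfolding block_sensitivity_def S_def .
qed

end
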